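(* Let $m$ be an even positive integer and let $a\ge 1$. Let $\mathcal{H}_\infty$ be the $m$-order infinite dimensional generalized Hilbert tensor and, for a positive integer $n$, $\mathcal{H}_n$ the $m$-order $n$-dimensional generalized Hilbert tensor, with entries $$\mathcal{H}_{i_1 i_2\cdots i_m}=\frac{1}{i_1+i_2+\cdots+i_m-m+a}$$ (with $i_1,\dots,i_m$ ranging over all positive integers for $\mathcal{H}_\infty$, and over $\{1,\dots,n\}$ for $\mathcal{H}_n$). Then both are positive definite, i.e. $$\mathcal{H}_\infty x^m=\sum_{i_1,\dots,i_m=1}^\infty \frac{x_{i_1}\cdots x_{i_m}}{i_1+\cdots+i_m-m+a}>0\quad\text{for all nonzero } x\in l^1,$$ $$\mathcal{H}_n x^m=\sum_{i_1,\dots,i_m=1}^n \frac{x_{i_1}\cdots x_{i_m}}{i_1+\cdots+i_m-m+a}>0\quad\text{for all nonzero } x\in\mathbb{R}^n.$$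
   Context: $l^1$ denotes the space of real sequences $x=(x_i)_{i=1}^\infty$ with $\sum_{i=1}^\infty |x_i|<\infty$; the series defining $\mathcal{H}_\infty x^m$ converges absolutely for $x\in l^1$. *)

theory Defs
  imports "HOL-Analysis.Analysis"
begin

text \<open>Sequences x = (x_i)_{i>=1} are modelled as functions nat => real; the value x 0
is irrelevant. Index tuples (i_1,...,i_m) are functions {..<m} => nat (extensional).\<close>

definition ghilbert_entry :: "nat \<Rightarrow> real \<Rightarrow> (nat \<Rightarrow> nat) \<Rightarrow> real" where
  "ghilbert_entry m a i = 1 / ((\<Sum>k<m. real (i k)) - real m + a)"

definition in_l1 :: "(nat \<Rightarrow> real) \<Rightarrow> bool" where
  "in_l1 x \<longleftrightarrow> (\<lambda>i. \<bar>x i\<bar>) summable_on {1..}"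

definition ghilbert_inf_form :: "nat \<Rightarrow> real \<Rightarrow> (nat \<Rightarrow> real) \<Rightarrow> real" where
  "ghilbert_inf_form m a x =
     infsum (\<lambda>i. ghilbert_entry m a i * (\<Prod>k<m. x (i k))) (PiE {..<m} (\<lambda>_. {1..}))"

definition ghilbert_fin_form :: "nat \<Rightarrow> real \<Rightarrow> nat \<Rightarrow> (nat \<Rightarrow> real) \<Rightarrow> real" where
  "ghilbert_fin_form m a n x =
     (\<Sum>i\<in>PiE {..<m} (\<lambda>_. {1..n}). ghilbert_entry m a i * (\<Prod>k<m. x (i k)))"

end

theory Submission
  imports Defs "HOL-Complex_Analysis.Cauchy_Integral_Formula"
begin

text \<open>Each entry is a moment: 1/(N + a) is the integral of t^(a-1) t^N over [0,1], where
  N = i_1 + ... + i_m - m. Summing, H_n x^m is the integral over [0,1] of t^(a-1) P_n(t)^m with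
  the polynomial P_n(t) = sum_{j<n} x_(j+1) t^j, and for x in l^1 dominated convergence gives the
  same formula for H_inf x^m with the power series P in place of P_n. Since m is even the
  integrand is nonnegative, and since P is a nonzero power series it does not vanish at some point
  of (0,1), where the integrand is continuous and positive; hence the integral is positive. The
  finite case is the infinite one applied to x truncated to {1..n}.\<close>

lemma finite_subset_UN_mono:
  assumes "finite X" "X \<subseteq> (\<Union>n. B n)" "mono (B :: nat \<Rightarrow> 'a set)"
  obtains N where "X \<subseteq> B N"
proof -
  have "subset.chain UNIV (range B)"
    unfolding subset.chain_def using monoD[OF assms(3)] nat_le_linear by blast
  then show ?thesis
    using finite_subset_Union_chain[OF assms(1)] assms(2) that by blast
qed

lemma sum_tendsto_infsum_mono_exhaustion:
  fixes h :: "'a \<Rightarrow> 'b::{comm_monoid_add, t2_space}"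
  assumes "h summable_on A" "\<And>n. finite (B n)" "mono B" "(\<Union>n. B n) = A"
  shows "(\<lambda>n. sum h (B n)) \<longlonglongrightarrow> infsum h A"
proof -
  have "(sum h \<longlongrightarrow> infsum h A) (finite_subsets_at_top A)"
    using assms(1) by (simp add: has_sum_def[symmetric])
  moreover have "filterlim B (finite_subsets_at_top A) sequentially"
    unfolding filterlim_finite_subsets_at_top
  proof (intro allI impI)
    fix X assume X: "finite X \<and> X \<subseteq> A"
    then obtain N where "X \<subseteq> B N"
      using finite_subset_UN_mono[of X B] assms(3,4) by blast
    then show "\<forall>\<^sub>F n in sequentially. finite (B n) \<and> X \<subseteq> B n \<and> B n \<subseteq> A"
      using monoD[OF assms(3)] assms(2,4) by (intro eventually_sequentiallyI[of N]) blast
  qed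
  ultimately show ?thesis
    by (rule filterlim_compose)
qed

lemma summable_powser_if_summable_abs:
  fixes c :: "nat \<Rightarrow> real"
  assumes "summable (\<lambda>j. \<bar>c j\<bar>)" "\<bar>t\<bar> \<le> 1"
  shows "summable (\<lambda>j. c j * t ^ j)"
  by (rule summable_comparison_test[OF _ assms(1)])
     (use assms(2) in \<open>auto simp: abs_mult power_abs intro!: mult_left_le power_le_one\<close>)

lemma powser_nonzero_in_interval:
  fixes c :: "nat \<Rightarrow> real"
  assumes r: "0 < r" and sm: "\<And>t. \<bar>t\<bar> < r \<Longrightarrow> summable (\<lambda>j. c j * t ^ j)"
    and "c j \<noteq> 0"
  obtains t where "0 < t" "t < r" "(\<Sum>j. c j * t ^ j) \<noteq> 0"
proof -
  define X where "X t = (\<Sum>j. c j * t ^ j)" for t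
  have "\<exists>t. 0 < t \<and> t < r \<and> X t \<noteq> 0"
  proof (cases "c 0 = 0")
    case False
    have "isCont X 0"
      unfolding X_def using r sm by (intro isCont_powser[where K = "r/2"]) auto
    moreover have "X 0 \<noteq> 0"
      using False powser_zero[of c] by (simp add: X_def)
    ultimately have "\<forall>\<^sub>F t in at 0. X t \<noteq> 0"
      unfolding isCont_def by (rule tendsto_imp_eventually_ne)
    then have "\<forall>\<^sub>F t in at_right 0. X t \<noteq> 0"
      by (simp add: eventually_at_split)
    moreover have "\<forall>\<^sub>F t in at_right 0. 0 < t \<and> t < r"
      using r by (auto simp: eventually_at_right_field)
    ultimately have "\<forall>\<^sub>F t in at_right 0. 0 < t \<and> t < r \<and> X t \<noteq> 0"
      by eventually_elim auto
    then show ?thesis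
      using eventually_happens[of _ "at_right (0::real)"] by auto
  next
    case True
    then have "j > 0" "X 0 = 0"
      using \<open>c j \<noteq> 0\<close> powser_zero[of c] by (auto simp: X_def intro: gr0I)
    moreover have "(\<lambda>n. c n * (t - 0) ^ n) sums X t" if "norm (t - 0) < r" for t
      using sm[of t] that by (simp add: X_def summable_sums)
    ultimately obtain s where s: "0 < s" "\<And>z. z \<in> cball 0 s - {0} \<Longrightarrow> X z \<noteq> 0"
      using powser_0_nonzero[OF r, where a = c and f = X and m = j and \<xi> = 0] \<open>c j \<noteq> 0\<close>
      by blast
    then show ?thesis
      using r by (intro exI[of _ "min s (r/2)"]) auto
  qed
  then show ?thesis
    using that unfolding X_def by blast
qed

lemma has_integral_pos_if_continuous_pos:
  fixes f :: "real \<Rightarrow> real"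
  assumes int: "(f has_integral I) {a..b}" and nonneg: "\<And>t. t \<in> {a..b} \<Longrightarrow> 0 \<le> f t"
    and s: "a < s" "s < b" and cont: "isCont f s" and pos: "0 < f s"
  shows "0 < I"
proof -
  have "\<exists>d>0. \<forall>t. t \<noteq> s \<and> norm (t - s) < d \<longrightarrow> norm (f t - f s) < f s / 2"
    using cont half_gt_zero[OF pos] unfolding isCont_def LIM_eq by blast
  then obtain d where d0: "0 < d"
    and near: "\<And>t. t \<noteq> s \<Longrightarrow> \<bar>t - s\<bar> < d \<Longrightarrow> \<bar>f t - f s\<bar> < f s / 2"
    by auto
  have d: "f s / 2 < f t" if "\<bar>t - s\<bar> < d" for t
    using near[of t] that pos by (cases "t = s") (auto simp: abs_if split: if_splits)
  define e where "e = min (d / 2) (min (s - a) (b - s))"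
  have e: "0 < e" "{s - e..s + e} \<subseteq> {a..b}"
    using d0 s by (auto simp: e_def)
  have close: "\<bar>t - s\<bar> < d" if "t \<in> {s - e..s + e}" for t
    using that d0 by (auto simp: e_def abs_le_iff)
  have f_int: "f integrable_on {a..b}" "f integrable_on {s - e..s + e}"
    using int integrable_subinterval_real[OF _ e(2)] by blast+
  have "0 < integral {s - e..s + e} (\<lambda>_. f s / 2)"
    using e(1) pos by simp
  also have "\<dots> \<le> integral {s - e..s + e} f"
  proof (rule integral_le)
    show "f s / 2 \<le> f t" if "t \<in> {s - e..s + e}" for t
      using d[OF close[OF that]] by simp
  qed (use f_int(2) in auto)
  also have "\<dots> \<le> integral {a..b} f"
    using f_int e(2) nonneg by (intro integral_subset_le) auto
  finally show ?thesis
    using int by (simp add: integral_unique)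
qed

lemma has_integral_powr_mult_power:
  fixes a :: real
  assumes "0 < a"
  shows "((\<lambda>t. t powr (a - 1) * t ^ N) has_integral 1 / (real N + a)) {0..1}"
proof -
  have "((\<lambda>t. t powr (real N + a - 1)) has_integral 1 / (real N + a)) {0..1}"
    using has_integral_powr_from_0[of "real N + a - 1" 1] assms by simp
  moreover have "t powr (a - 1) * t ^ N = t powr (real N + a - 1)" if "t \<in> {0..1}" for t :: real
    using that
    by (cases "t = 0") (auto simp: powr_realpow[symmetric] powr_add[symmetric] algebra_simps)
  ultimately show ?thesis
    by (subst has_integral_cong) auto
qed

lemma ghilbert_entry_eq:
  fixes I :: "nat \<Rightarrow> nat"
  assumes "\<And>k. k < m \<Longrightarrow> 1 \<le> I k"
  shows "ghilbert_entry m a I = 1 / (real (\<Sum>k<m. I k - 1) + a)"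
proof -
  have "real (\<Sum>k<m. I k - 1) = (\<Sum>k<m. real (I k) - 1)"
    using assms by (auto simp: of_nat_diff intro!: sum.cong)
  then show ?thesis
    by (simp add: ghilbert_entry_def sum_subtractf)
qed

lemma abs_ghilbert_entry_le_1:
  fixes I :: "nat \<Rightarrow> nat"
  assumes "1 \<le> a" "\<And>k. k < m \<Longrightarrow> 1 \<le> I k"
  shows "\<bar>ghilbert_entry m a I\<bar> \<le> 1"
proof -
  obtain N :: nat where "ghilbert_entry m a I = 1 / (real N + a)"
    using ghilbert_entry_eq[of m I a] assms(2) by blast
  then show ?thesis
    using assms(1) by simp
qed

lemma ghilbert_fin_form_has_integral:
  assumes "0 < a"
  shows "((\<lambda>t. t powr (a - 1) * (\<Sum>j<n. x (Suc j) * t ^ j) ^ m)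
           has_integral ghilbert_fin_form m a n x) {0..1}"
proof -
  let ?B = "PiE {..<m} (\<lambda>_. {1..n})"
  define N where "N I = (\<Sum>k<m. I k - 1)" for I :: "nat \<Rightarrow> nat"
  have "(\<Sum>j<n. x (Suc j) * t ^ j) ^ m = (\<Sum>I\<in>?B. (\<Prod>k<m. x (I k)) * t ^ N I)" for t :: real
  proof -
    have "(\<Sum>j<n. x (Suc j) * t ^ j) ^ m = (\<Prod>k<m. \<Sum>i\<in>{1..n}. x i * t ^ (i - 1))"
      by (simp add: sum.atLeast1_atMost_eq)
    also have "\<dots> = (\<Sum>I\<in>?B. \<Prod>k<m. x (I k) * t ^ (I k - 1))"
      by (rule prod_sum_PiE) auto
    finally show ?thesis
      by (simp add: N_def prod.distrib power_sum)
  qed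
  moreover have "((\<lambda>t. t powr (a - 1) * ((\<Prod>k<m. x (I k)) * t ^ N I))
      has_integral ghilbert_entry m a I * (\<Prod>k<m. x (I k))) {0..1}" if I: "I \<in> ?B" for I
  proof -
    have entry: "ghilbert_entry m a I = 1 / (real (N I) + a)"
      using ghilbert_entry_eq[of m I a] I by (auto simp: N_def PiE_iff)
    have "((\<lambda>t. (\<Prod>k<m. x (I k)) * (t powr (a - 1) * t ^ N I))
        has_integral (\<Prod>k<m. x (I k)) * (1 / (real (N I) + a))) {0..1}"
      by (rule has_integral_mult_right[OF has_integral_powr_mult_power[OF assms]])
    then show ?thesis
      by (simp add: entry mult_ac)
  qed
  then have "((\<lambda>t. \<Sum>I\<in>?B. t powr (a - 1) * ((\<Prod>k<m. x (I k)) * t ^ N I))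
      has_integral ghilbert_fin_form m a n x) {0..1}"
    unfolding ghilbert_fin_form_def by (intro has_integral_sum) (auto simp: finite_PiE)
  ultimately show ?thesis
    by (simp add: sum_distrib_left)
qed

lemma in_l1_summable_Suc:
  assumes "in_l1 x"
  shows "summable (\<lambda>j. \<bar>x (Suc j)\<bar>)"
proof -
  have "(\<lambda>i. \<bar>x i\<bar>) summable_on range Suc"
    using assms by (simp add: in_l1_def greaterThan_0[symmetric] atLeast_Suc_greaterThan[symmetric])
  then have "(\<lambda>j. \<bar>x (Suc j)\<bar>) summable_on UNIV"
    by (subst (asm) summable_on_reindex) (auto simp: o_def)
  then show ?thesis
    by (simp add: summable_on_UNIV_nonneg_real_iff)
qed

lemma in_l1_summable_on_abs_prod_PiE:
  fixes m :: nat
  assumes "in_l1 x"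
  shows "(\<lambda>I. \<bar>\<Prod>k<m. x (I k)\<bar>) summable_on PiE {..<m} (\<lambda>_. {1..})"
proof -
  have "Infinite_Set_Sum.abs_summable_on x {1..}"
    using assms unfolding in_l1_def abs_summable_equivalent[symmetric] by simp
  then have "Infinite_Set_Sum.abs_summable_on (\<lambda>I. \<Prod>k<m. x (I k)) (PiE {..<m} (\<lambda>_. {1..}))"
    by (intro abs_summable_on_prod_PiE) auto
  then show ?thesis
    unfolding abs_summable_equivalent[symmetric] by simp
qed

lemma ghilbert_summable_on:
  fixes x :: "nat \<Rightarrow> real"
  assumes "1 \<le> a" "in_l1 x"
  shows "(\<lambda>I. ghilbert_entry m a I * (\<Prod>k<m. x (I k))) summable_on PiE {..<m} (\<lambda>_. {1..})"
proof (rule abs_summable_summable)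
  show "(\<lambda>I. norm (ghilbert_entry m a I * (\<Prod>k<m. x (I k)))) summable_on PiE {..<m} (\<lambda>_. {1..})"
  proof (rule summable_on_comparison_test[OF in_l1_summable_on_abs_prod_PiE[OF assms(2)]])
    fix I :: "nat \<Rightarrow> nat" assume "I \<in> PiE {..<m} (\<lambda>_. {1..})"
    then have "\<bar>ghilbert_entry m a I\<bar> \<le> 1"
      using assms(1) by (intro abs_ghilbert_entry_le_1) (auto simp: PiE_iff)
    then show "norm (ghilbert_entry m a I * (\<Prod>k<m. x (I k))) \<le> \<bar>\<Prod>k<m. x (I k)\<bar>"
      by (simp add: abs_mult mult_left_le_one_le)
  qed simp
qed

lemma UN_PiE_atLeastAtMost:
  "(\<Union>n. PiE {..<m::nat} (\<lambda>_. {1..n})) = PiE {..<m} (\<lambda>_. {1::nat..})"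
proof
  show "PiE {..<m} (\<lambda>_. {1::nat..}) \<subseteq> (\<Union>n. PiE {..<m} (\<lambda>_. {1..n}))"
  proof
    fix I assume I: "I \<in> PiE {..<m} (\<lambda>_. {1::nat..})"
    then have "I \<in> PiE {..<m} (\<lambda>_. {1..\<Sum>k<m. I k})"
      by (auto simp: PiE_iff intro!: member_le_sum)
    then show "I \<in> (\<Union>n. PiE {..<m} (\<lambda>_. {1..n}))"
      by blast
  qed
qed (intro UN_least PiE_mono, auto)

lemma mono_PiE_atLeastAtMost: "mono (\<lambda>n. PiE {..<m::nat} (\<lambda>_. {1::nat..n}))"
  by (rule monoI, rule PiE_mono) auto

lemma ghilbert_fin_form_tendsto_inf_form:
  assumes "1 \<le> a" "in_l1 x"
  shows "(\<lambda>n. ghilbert_fin_form m a n x) \<longlonglongrightarrow> ghilbert_inf_form m a x"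
  unfolding ghilbert_fin_form_def ghilbert_inf_form_def
  by (rule sum_tendsto_infsum_mono_exhaustion[OF ghilbert_summable_on[OF assms]
        _ mono_PiE_atLeastAtMost UN_PiE_atLeastAtMost]) (simp add: finite_PiE)

lemma ghilbert_inf_form_has_integral:
  assumes a: "1 \<le> a" and x: "in_l1 x"
  shows "((\<lambda>t. t powr (a - 1) * (\<Sum>j. x (Suc j) * t ^ j) ^ m)
           has_integral ghilbert_inf_form m a x) {0..1}"
proof -
  define L where "L = (\<Sum>j. \<bar>x (Suc j)\<bar>)"
  have sm: "summable (\<lambda>j. \<bar>x (Suc j)\<bar>)"
    using x by (rule in_l1_summable_Suc)
  have partial_le: "\<bar>\<Sum>j<n. x (Suc j) * t ^ j\<bar> \<le> L" if "\<bar>t\<bar> \<le> 1" for n and t :: real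
  proof -
    have "\<bar>\<Sum>j<n. x (Suc j) * t ^ j\<bar> \<le> (\<Sum>j<n. \<bar>x (Suc j) * t ^ j\<bar>)"
      by (rule sum_abs)
    also have "\<dots> \<le> (\<Sum>j<n. \<bar>x (Suc j)\<bar>)"
      using that by (intro sum_mono) (auto simp: abs_mult power_abs intro!: mult_left_le power_le_one)
    also have "\<dots> \<le> L"
      unfolding L_def using sm by (rule sum_le_suminf) auto
    finally show ?thesis .
  qed
  show ?thesis
  proof (rule has_integral_dominated_convergence[where h = "\<lambda>_. L ^ m"])
    show "((\<lambda>t. t powr (a - 1) * (\<Sum>j<n. x (Suc j) * t ^ j) ^ m)
        has_integral ghilbert_fin_form m a n x) {0..1}" for n
      using a by (intro ghilbert_fin_form_has_integral) simp
    show "(\<lambda>_. L ^ m) integrable_on {0..1::real}"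
      by (rule integrable_const_ivl)
    show "\<forall>t\<in>{0..1}. norm (t powr (a - 1) * (\<Sum>j<n. x (Suc j) * t ^ j) ^ m) \<le> L ^ m" for n
    proof
      fix t :: real assume t: "t \<in> {0..1}"
      have "norm (t powr (a - 1) * (\<Sum>j<n. x (Suc j) * t ^ j) ^ m)
          = \<bar>t powr (a - 1)\<bar> * \<bar>\<Sum>j<n. x (Suc j) * t ^ j\<bar> ^ m"
        by (simp add: abs_mult power_abs)
      also have "\<dots> \<le> 1 * L ^ m"
        using t a by (intro mult_mono power_mono partial_le) (auto intro!: powr_le1)
      finally show "norm (t powr (a - 1) * (\<Sum>j<n. x (Suc j) * t ^ j) ^ m) \<le> L ^ m"
        by simp
    qed
    show "\<forall>t\<in>{0..1}. (\<lambda>n. t powr (a - 1) * (\<Sum>j<n. x (Suc j) * t ^ j) ^ m)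
        \<longlonglongrightarrow> t powr (a - 1) * (\<Sum>j. x (Suc j) * t ^ j) ^ m"
      using sm by (auto intro!: tendsto_mult_left tendsto_power summable_LIMSEQ
          summable_powser_if_summable_abs)
    show "(\<lambda>n. ghilbert_fin_form m a n x) \<longlonglongrightarrow> ghilbert_inf_form m a x"
      using a x by (rule ghilbert_fin_form_tendsto_inf_form)
  qed
qed

lemma ghilbert_inf_form_pos:
  assumes "even m" "1 \<le> a" "in_l1 x" "1 \<le> i" "x i \<noteq> 0"
  shows "0 < ghilbert_inf_form m a x"
proof -
  define X where "X t = (\<Sum>j. x (Suc j) * t ^ j)" for t :: real
  have sm: "summable (\<lambda>j. x (Suc j) * t ^ j)" if "\<bar>t\<bar> \<le> 1" for t :: real
    using in_l1_summable_Suc[OF assms(3)] that by (rule summable_powser_if_summable_abs)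
  have "x (Suc (i - 1)) \<noteq> 0"
    using assms(4,5) by simp
  then obtain t0 where t0: "0 < t0" "t0 < 1" "X t0 \<noteq> 0"
    using powser_nonzero_in_interval[of 1 "\<lambda>j. x (Suc j)" "i - 1"] sm unfolding X_def by auto
  have "isCont X t0"
    unfolding X_def using sm[of 1] t0 by (intro isCont_powser[where K = 1]) auto
  then have cont: "isCont (\<lambda>t. t powr (a - 1) * X t ^ m) t0"
    using t0 by (intro isCont_mult isCont_power continuous_intros) auto
  have pos: "0 < t0 powr (a - 1) * X t0 ^ m"
    using t0 assms(1) by (simp add: zero_less_power_eq)
  have nonneg: "0 \<le> t powr (a - 1) * X t ^ m" for t
    using assms(1) by (simp add: zero_le_even_power)
  have "((\<lambda>t. t powr (a - 1) * X t ^ m) has_integral ghilbert_inf_form m a x) {0..1}"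
    unfolding X_def using assms(2,3) by (rule ghilbert_inf_form_has_integral)
  then show ?thesis
    using nonneg t0(1,2) cont pos by (rule has_integral_pos_if_continuous_pos)
qed

lemma in_l1_truncation: "in_l1 (\<lambda>i. if i \<in> {1..n} then x i else 0)"
proof -
  have "(\<lambda>i. \<bar>if i \<in> {1..n} then x i else 0\<bar>) summable_on {1..n}"
    by simp
  then show ?thesis
    unfolding in_l1_def by (rule summable_on_cong_neutral[THEN iffD1, rotated -1]) auto
qed

lemma ghilbert_inf_form_truncation:
  "ghilbert_inf_form m a (\<lambda>i. if i \<in> {1..n} then x i else 0) = ghilbert_fin_form m a n x"
proof -
  let ?y = "\<lambda>i. if i \<in> {1..n} then x i else 0"
  have "(\<Prod>k<m. ?y (I k)) = 0" if "I \<in> PiE {..<m} (\<lambda>_. {1..}) - PiE {..<m} (\<lambda>_. {1..n})" for I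
    using that by (auto simp: PiE_iff)
  then have "ghilbert_inf_form m a ?y
      = (\<Sum>I\<in>PiE {..<m} (\<lambda>_. {1..n}). ghilbert_entry m a I * (\<Prod>k<m. ?y (I k)))"
    unfolding ghilbert_inf_form_def
    by (subst infsum_cong_neutral[where T = "PiE {..<m} (\<lambda>_. {1..n})"])
       (auto simp: finite_PiE PiE_iff)
  also have "\<dots> = ghilbert_fin_form m a n x"
    unfolding ghilbert_fin_form_def
    by (intro sum.cong refl arg_cong2[where f = "(*)"] prod.cong) (auto simp: PiE_iff)
  finally show ?thesis .
qed

theorem theorem3p1:
  fixes m :: nat and a :: real
  assumes "even m" and "m > 0" and "a \<ge> 1"
  shows "(\<forall>x. in_l1 x \<and> (\<exists>i\<ge>1. x i \<noteq> 0) \<longrightarrow> ghilbert_inf_form m a x > 0)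
       \<and> (\<forall>n::nat. n \<ge> 1 \<longrightarrow>
            (\<forall>x. (\<exists>i\<in>{1..n}. x i \<noteq> 0) \<longrightarrow> ghilbert_fin_form m a n x > 0))"
proof (intro conjI allI impI)
  fix x assume "in_l1 x \<and> (\<exists>i\<ge>1. x i \<noteq> 0)"
  then show "ghilbert_inf_form m a x > 0"
    using ghilbert_inf_form_pos[OF assms(1,3)] by blast
next
  fix n :: nat and x :: "nat \<Rightarrow> real"
  assume "\<exists>i\<in>{1..n}. x i \<noteq> 0"
  then obtain i where "i \<in> {1..n}" "x i \<noteq> 0"
    by blast
  then have "0 < ghilbert_inf_form m a (\<lambda>i. if i \<in> {1..n} then x i else 0)"
    by (intro ghilbert_inf_form_pos[OF assms(1,3) in_l1_truncation, of i]) auto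
  then show "ghilbert_fin_form m a n x > 0"
    by (simp only: ghilbert_inf_form_truncation)
qed

end
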